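(* Let $\mathscr{G}_n$ be a simple, verbose $\upsilon$-reduction grammar. Then for each production $G_n \to \chi[\sigma_1]\cdots[\sigma_w]$ of $\mathscr{G}_n$ whose right-hand side has closure width $w$, every ground term $\delta \in L(\chi[\sigma_1]\cdots[\sigma_w])$ has closure width $w$.
   Context: $\lambda\upsilon$-terms: $t ::= \underline{n} \mid \lambda t \mid t\,t \mid t[s]$; substitutions $s ::= t/ \mid \Uparrow(s) \mid\ \uparrow$; indices $\underline{n} ::= \underline{0} \mid \mathtt{S}\,\underline{n}$. The $\upsilon$-rules: $(a b)[s] \to a[s](b[s])$; $(\lambda a)[s] \to \lambda(a[\Uparrow(s)])$; $\underline{0}[a/] \to a$; $(\mathtt{S}\,\underline{n})[a/] \to \underline{n}$; $\underline{0}[\Uparrow(s)] \to \underline{0}$; $(\mathtt{S}\,\underline{n})[\Uparrow(s)] \to \underline{n}[s][\uparrow]$; $\underline{n}[\uparrow] \to \mathtt{S}\,\underline{n}$. A term normalises in $k$ steps if leftmost-outermost $\upsilon$-reduction reaches a $\upsilon$-normal form in exactly $k$ steps. $\mathscr{F}$ is the ranked alphabet of $\lambda\upsilon$ symbols (application, closure $\cdot[\cdot]$ binary; $\lambda$, $\cdot/$, $\Uparrow$, $\mathtt{S}$ unary; $\uparrow,\underline{0}$ constants); $\mathscr{T}_{\mathscr{F}}(X)$ is the set of terms over $\mathscr{F}$ with variables from $X$. In a regular tree grammar with productions $X\to\alpha$, $L(\alpha)$ is the set of ground terms derivable from $\alpha$; a non-terminal is unambiguous if each ground term has at most one derivation from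 it; a production $X\to\alpha$ is self-referencing if $X$ occurs in $\alpha$, regular otherwise. $\Lambda$ has productions $T \to N \mid \lambda T \mid T T \mid T[S]$, $S \to T/ \mid \Uparrow(S) \mid \uparrow$, $N \to \underline{0} \mid \mathtt{S} N$. A $\upsilon$-reduction grammar $\mathscr{G}_n$ has axiom $G_n$, non-terminals $\{T,S,N,G_0,\dots,G_n\}$, contains all productions of $\Lambda$, and each $G_k$ ($0\le k\le n$) is unambiguous with $L(G_k)$ the set of terms normalising in exactly $k$ steps. It is simple if its self-referencing productions are productions of $\Lambda$ or of the form $G_k \to \lambda G_k \mid G_0 G_k \mid G_k G_0$, and each regular production $G_k\to\alpha$ has $\alpha \in \mathscr{T}_{\mathscr{F}}(\{T,S,N,G_0,\dots,G_{k-1}\})$. It is verbose if none of its productions has the form $X \to G_k[\sigma_1]\cdots[\sigma_w]$ for some $k$ and $w\ge 0$. A term $\alpha$ has closure width $w$ if $w$ is the largest non-negative integer such that $\alpha = \chi[\sigma_1]\cdots[\sigma_w]$ for some term $\chi$ (the head) and terms $\sigma_1,\dots,\sigma_w$. *)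

theory Defs
  imports Main
begin

datatype 'v tm =
    Var 'v
  | App "'v tm" "'v tm"
  | Clo "'v tm" "'v tm"
  | Lam "'v tm"
  | Slash "'v tm"
  | Lift "'v tm"
  | Succ "'v tm"
  | Shift
  | Zero

text \<open>Ground terms are those without variables (set_tm t = {}).\<close>

fun is_idx :: "'v tm \<Rightarrow> bool" where
  "is_idx Zero = True"
| "is_idx (Succ n) = is_idx n"
| "is_idx _ = False"

fun is_term :: "'v tm \<Rightarrow> bool" and is_subst :: "'v tm \<Rightarrow> bool" where
  "is_term Zero = True"
| "is_term (Succ n) = is_idx n"
| "is_term (Lam a) = is_term a"
| "is_term (App a b) = (is_term a \<and> is_term b)"
| "is_term (Clo a s) = (is_term a \<and> is_subst s)"
| "is_term _ = False"
| "is_subst (Slash a) = is_term a"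
| "is_subst (Lift s) = is_subst s"
| "is_subst Shift = True"
| "is_subst _ = False"

fun contract :: "'v tm \<Rightarrow> 'v tm option" where
  "contract (Clo (App a b) s) = Some (App (Clo a s) (Clo b s))"
| "contract (Clo (Lam a) s) = Some (Lam (Clo a (Lift s)))"
| "contract (Clo Zero (Slash a)) = Some a"
| "contract (Clo (Succ n) (Slash a)) = (if is_idx n then Some n else None)"
| "contract (Clo Zero (Lift s)) = Some Zero"
| "contract (Clo (Succ n) (Lift s)) = (if is_idx n then Some (Clo (Clo n s) Shift) else None)"
| "contract (Clo n Shift) = (if is_idx n then Some (Succ n) else None)"
| "contract _ = None"

definition first2 :: "('v tm \<Rightarrow> 'v tm \<Rightarrow> 'v tm) \<Rightarrow> 'v tm \<Rightarrow> 'v tm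
                      \<Rightarrow> 'v tm option \<Rightarrow> 'v tm option \<Rightarrow> 'v tm option" where
  "first2 C a b ra rb = (case ra of Some a' \<Rightarrow> Some (C a' b) | None \<Rightarrow> map_option (C a) rb)"

text \<open>One leftmost-outermost step: contract the first redex in pre-order; None iff normal form.\<close>
fun lo_step :: "'v tm \<Rightarrow> 'v tm option" where
  "lo_step (Var x) = None"
| "lo_step Zero = None"
| "lo_step Shift = None"
| "lo_step (App a b) = first2 App a b (lo_step a) (lo_step b)"
| "lo_step (Clo a s) = (case contract (Clo a s) of Some u \<Rightarrow> Some u
                          | None \<Rightarrow> first2 Clo a s (lo_step a) (lo_step s))"
| "lo_step (Lam a) = map_option Lam (lo_step a)"
| "lo_step (Slash a) = map_option Slash (lo_step a)"
| "lo_step (Lift a) = map_option Lift (lo_step a)"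
| "lo_step (Succ a) = map_option Succ (lo_step a)"

fun lo_iter :: "nat \<Rightarrow> 'v tm \<Rightarrow> 'v tm option" where
  "lo_iter 0 t = Some t"
| "lo_iter (Suc k) t = (case lo_step t of None \<Rightarrow> None | Some t' \<Rightarrow> lo_iter k t')"

definition normalises_in :: "'v tm \<Rightarrow> nat \<Rightarrow> bool" where
  "normalises_in t k \<longleftrightarrow> (\<exists>u. lo_iter k t = Some u \<and> lo_step u = None)"

datatype nt = NT | NS | NN | NG nat

type_synonym prod = "nt \<times> nt tm"

datatype drv = DNode prod "drv list"

text \<open>deriv P X d t: d is a derivation of ground term t from non-terminal X;
  rderiv P \<alpha> ds t: ds are the derivations for the non-terminal occurrences of \<alpha>
  (left to right), yielding the ground term t.\<close>
inductive deriv :: "prod set \<Rightarrow> nt \<Rightarrow> drv \<Rightarrow> nt tm \<Rightarrow> bool"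
  and rderiv :: "prod set \<Rightarrow> nt tm \<Rightarrow> drv list \<Rightarrow> nt tm \<Rightarrow> bool"
  for P :: "prod set" where
  d_prod: "(X, \<alpha>) \<in> P \<Longrightarrow> rderiv P \<alpha> ds t \<Longrightarrow> deriv P X (DNode (X, \<alpha>) ds) t"
| r_var: "deriv P Y d t \<Longrightarrow> rderiv P (Var Y) [d] t"
| r_app: "rderiv P a ds1 t1 \<Longrightarrow> rderiv P b ds2 t2 \<Longrightarrow> rderiv P (App a b) (ds1 @ ds2) (App t1 t2)"
| r_clo: "rderiv P a ds1 t1 \<Longrightarrow> rderiv P b ds2 t2 \<Longrightarrow> rderiv P (Clo a b) (ds1 @ ds2) (Clo t1 t2)"
| r_lam: "rderiv P a ds t \<Longrightarrow> rderiv P (Lam a) ds (Lam t)"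
| r_slash: "rderiv P a ds t \<Longrightarrow> rderiv P (Slash a) ds (Slash t)"
| r_lift: "rderiv P a ds t \<Longrightarrow> rderiv P (Lift a) ds (Lift t)"
| r_succ: "rderiv P a ds t \<Longrightarrow> rderiv P (Succ a) ds (Succ t)"
| r_shift: "rderiv P Shift [] Shift"
| r_zero: "rderiv P Zero [] Zero"

definition lang :: "prod set \<Rightarrow> nt tm \<Rightarrow> nt tm set" where
  "lang P \<alpha> = {t. \<exists>ds. rderiv P \<alpha> ds t}"

definition unambiguous :: "prod set \<Rightarrow> nt \<Rightarrow> bool" where
  "unambiguous P X \<longleftrightarrow> (\<forall>t d1 d2. deriv P X d1 t \<longrightarrow> deriv P X d2 t \<longrightarrow> d1 = d2)"

definition Lambda_prods :: "prod set" where
  "Lambda_prods = {(NT, Var NN), (NT, Lam (Var NT)), (NT, App (Var NT) (Var NT)),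
                   (NT, Clo (Var NT) (Var NS)),
                   (NS, Slash (Var NT)), (NS, Lift (Var NS)), (NS, Shift),
                   (NN, Zero), (NN, Succ (Var NN))}"

definition nonterms :: "nat \<Rightarrow> nt set" where
  "nonterms n = {NT, NS, NN} \<union> NG ` {..n}"

text \<open>An upsilon-reduction grammar G_n (axiom NG n).\<close>
definition reduction_grammar :: "prod set \<Rightarrow> nat \<Rightarrow> bool" where
  "reduction_grammar P n \<longleftrightarrow>
     finite P
   \<and> (\<forall>(X, \<alpha>) \<in> P. X \<in> nonterms n \<and> set_tm \<alpha> \<subseteq> nonterms n)
   \<and> Lambda_prods \<subseteq> P
   \<and> (\<forall>k \<le> n. unambiguous P (NG k)
              \<and> lang P (Var (NG k)) = {t. is_term t \<and> normalises_in t k})"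

definition simple_grammar :: "prod set \<Rightarrow> bool" where
  "simple_grammar P \<longleftrightarrow>
     (\<forall>(X, \<alpha>) \<in> P.
        (X \<in> set_tm \<alpha> \<longrightarrow>
           (X, \<alpha>) \<in> Lambda_prods
         \<or> (\<exists>k. X = NG k \<and> (\<alpha> = Lam (Var (NG k)) \<or> \<alpha> = App (Var (NG 0)) (Var (NG k))
                                \<or> \<alpha> = App (Var (NG k)) (Var (NG 0))))) \<and>
        (\<forall>k. X = NG k \<and> X \<notin> set_tm \<alpha> \<longrightarrow> set_tm \<alpha> \<subseteq> {NT, NS, NN} \<union> NG ` {..<k}))"

definition closures :: "'v tm \<Rightarrow> 'v tm list \<Rightarrow> 'v tm" where
  "closures \<chi> \<sigma>s = foldl Clo \<chi> \<sigma>s"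

definition verbose :: "prod set \<Rightarrow> bool" where
  "verbose P \<longleftrightarrow> (\<forall>(X, \<alpha>) \<in> P. \<not> (\<exists>k \<sigma>s. \<alpha> = closures (Var (NG k)) \<sigma>s))"

definition closure_width :: "'v tm \<Rightarrow> nat" where
  "closure_width \<alpha> = (GREATEST w. \<exists>\<chi> \<sigma>s. length \<sigma>s = w \<and> \<alpha> = closures \<chi> \<sigma>s)"

end

theory Submission
  imports Defs
begin

(* Write \<alpha> = \<chi>[\<sigma>\<^sub>1]...[\<sigma>\<^sub>w] with \<chi> not a closure. Every \<delta> \<in> L(\<alpha>) is t[s\<^sub>1]...[s\<^sub>w] with
   t \<in> L(\<chi>), and t may be replaced by any t' \<in> L(\<chi>) without leaving L(\<alpha>) \<subseteq> L(G\<^sub>n), so it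
   suffices that L(\<chi>) contains no closure. This is clear unless \<chi> is a non-terminal. It
   cannot be some G\<^sub>k (verbosity), nor S (substitutions are not terms), nor T: then both
   0[s\<^sub>1]...[s\<^sub>w] and (0 0)[s\<^sub>1]...[s\<^sub>w] would normalise in exactly n steps, although the
   second one needs w + 2n steps, and for w = n = 0 the redex 0[\<up>] would be in L(G\<^sub>0).
   Finally N derives no closure: infinitely many indices lie in L(G\<^sub>0) but the grammar is
   finite, so by simplicity some production G\<^sub>0 \<rightarrow> S\<^sup>j X with X \<in> {T, S, N} is used, and a closure
   derived from X would put a reducible or ill-sorted term S\<^sup>j c into L(G\<^sub>0). *)

fun clo_head :: "'v tm \<Rightarrow> 'v tm" where
  "clo_head (Clo a s) = clo_head a"
| "clo_head t = t"

fun clo_args :: "'v tm \<Rightarrow> 'v tm list" where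
  "clo_args (Clo a s) = clo_args a @ [s]"
| "clo_args _ = []"

lemma closures_Nil [simp]: "closures \<chi> [] = \<chi>"
  by (simp add: closures_def)

lemma closures_snoc [simp]: "closures \<chi> (\<sigma>s @ [\<sigma>]) = Clo (closures \<chi> \<sigma>s) \<sigma>"
  by (simp add: closures_def)

lemma closures_Cons: "closures \<chi> (\<sigma> # \<sigma>s) = closures (Clo \<chi> \<sigma>) \<sigma>s"
  by (simp add: closures_def)

lemma closures_clo_head_clo_args: "closures (clo_head t) (clo_args t) = t"
  by (induction t) auto

lemma clo_args_clo_head [simp]: "clo_args (clo_head t) = []"
  by (induction t) auto

lemma clo_args_closures [simp]: "clo_args (closures \<chi> \<sigma>s) = clo_args \<chi> @ \<sigma>s"
  by (induction \<sigma>s rule: rev_induct) auto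

lemma closure_width_eq_length_clo_args: "closure_width t = length (clo_args t)"
  unfolding closure_width_def
proof (rule Greatest_equality)
  show "\<exists>\<chi> \<sigma>s. length \<sigma>s = length (clo_args t) \<and> t = closures \<chi> \<sigma>s"
    using closures_clo_head_clo_args by metis
next
  fix w assume "\<exists>\<chi> \<sigma>s. length \<sigma>s = w \<and> t = closures \<chi> \<sigma>s"
  then show "w \<le> length (clo_args t)" by auto
qed

lemma closure_width_closures:
  "closure_width (closures \<chi> \<sigma>s) = closure_width \<chi> + length \<sigma>s"
  by (simp add: closure_width_eq_length_clo_args)

inductive_cases rderiv_VarE: "rderiv P (Var X) ds t"
inductive_cases rderiv_CloE: "rderiv P (Clo a b) ds t"
inductive_cases rderiv_AppE: "rderiv P (App a b) ds t"
inductive_cases rderiv_SuccE: "rderiv P (Succ a) ds t"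
inductive_cases rderiv_ZeroE: "rderiv P Zero ds t"
inductive_cases rderiv_ShiftE: "rderiv P Shift ds t"
inductive_cases derivE: "deriv P X d t"

lemma mem_lang_Var: "t \<in> lang P (Var X) \<longleftrightarrow> (\<exists>\<beta>. (X, \<beta>) \<in> P \<and> t \<in> lang P \<beta>)"
  by (auto simp: lang_def intro: deriv_rderiv.intros elim!: rderiv_VarE derivE)

lemma lang_rhs_subset_lang_Var: "(X, \<beta>) \<in> P \<Longrightarrow> lang P \<beta> \<subseteq> lang P (Var X)"
  using mem_lang_Var by blast

lemma lang_Clo: "lang P (Clo a b) = {Clo x y |x y. x \<in> lang P a \<and> y \<in> lang P b}"
  by (auto simp: lang_def intro: deriv_rderiv.intros elim!: rderiv_CloE)

lemma lang_App: "lang P (App a b) = {App x y |x y. x \<in> lang P a \<and> y \<in> lang P b}"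
  by (auto simp: lang_def intro: deriv_rderiv.intros elim!: rderiv_AppE)

lemma lang_Succ: "lang P (Succ a) = Succ ` lang P a"
  by (auto simp: lang_def intro: deriv_rderiv.intros elim!: rderiv_SuccE)

lemma lang_Zero: "lang P Zero = {Zero}"
  by (auto simp: lang_def intro: deriv_rderiv.intros elim!: rderiv_ZeroE)

lemma lang_Shift: "lang P Shift = {Shift}"
  by (auto simp: lang_def intro: deriv_rderiv.intros elim!: rderiv_ShiftE)

lemma mem_lang_closures:
  assumes "\<delta> \<in> lang P (closures \<chi> \<sigma>s)"
  shows "\<exists>t ss. t \<in> lang P \<chi> \<and> \<delta> = closures t ss \<and> length ss = length \<sigma>s
           \<and> (\<forall>t' \<in> lang P \<chi>. closures t' ss \<in> lang P (closures \<chi> \<sigma>s))"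
  using assms
proof (induction \<sigma>s arbitrary: \<delta> rule: rev_induct)
  case Nil
  then show ?case by (metis closures_Nil list.size(3))
next
  case (snoc \<sigma> \<sigma>s)
  then obtain \<delta>' s where \<delta>: "\<delta> = Clo \<delta>' s" "\<delta>' \<in> lang P (closures \<chi> \<sigma>s)" "s \<in> lang P \<sigma>"
    by (auto simp: lang_Clo)
  with snoc.IH obtain t ss where "t \<in> lang P \<chi>" "\<delta>' = closures t ss" "length ss = length \<sigma>s"
    "\<forall>t' \<in> lang P \<chi>. closures t' ss \<in> lang P (closures \<chi> \<sigma>s)"
    by blast
  with \<delta> show ?case
    by (intro exI[of _ t] exI[of _ "ss @ [s]"]) (auto simp: lang_Clo)
qed

lemma lang_preserves_closure_free_head:
  assumes "t \<in> lang P \<chi>" and "\<forall>X. \<chi> \<noteq> Var X" and "clo_args \<chi> = []"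
  shows "clo_args t = []"
  using assms by (cases \<chi>) (auto simp: lang_def elim: rderiv.cases)

lemma normalises_in_unique: "normalises_in t k \<Longrightarrow> normalises_in t k' \<Longrightarrow> k = k'"
  by (induction k arbitrary: t k'; case_tac k') (auto simp: normalises_in_def split: option.splits)

lemma normalises_in_0: "normalises_in t 0 \<longleftrightarrow> lo_step t = None"
  by (simp add: normalises_in_def)

lemma lo_iter_add: "lo_iter (k + l) t = Option.bind (lo_iter k t) (lo_iter l)"
  by (induction k arbitrary: t) (auto split: option.splits)

lemma lo_step_Clo_term_subst: "is_term a \<Longrightarrow> is_subst s \<Longrightarrow> lo_step (Clo a s) \<noteq> None"
proof (induction a arbitrary: s)
  case (Clo a s')
  then have "lo_step (Clo a s') \<noteq> None" by simp
  then show ?case by (auto simp: first2_def split: option.splits)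
next
  case (Succ n)
  then show ?case by (cases s) auto
next
  case Zero
  then show ?case by (cases s) auto
qed auto

lemma lo_step_closures_Clo:
  "lo_step (Clo x y) = Some z \<Longrightarrow> lo_step (closures (Clo x y) ss) = Some (closures z ss)"
proof (induction ss arbitrary: x y z)
  case (Cons r ss)
  have "contract (Clo (Clo x y) r) = None" by (cases r) auto
  with Cons.prems have "lo_step (Clo (Clo x y) r) = Some (Clo z r)"
    by (simp add: first2_def)
  with Cons.IH show ?case by (simp add: closures_Cons)
qed simp

lemma lo_iter_closures_App:
  "lo_iter (length ss') (closures (App (closures a ss) (closures b ss)) ss')
     = Some (App (closures a (ss @ ss')) (closures b (ss @ ss')))"
proof (induction ss' arbitrary: ss)
  case (Cons s ss')
  have "lo_step (closures (App (closures a ss) (closures b ss)) (s # ss'))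
          = Some (closures (App (closures a (ss @ [s])) (closures b (ss @ [s]))) ss')"
    by (simp add: closures_Cons lo_step_closures_Clo)
  with Cons.IH[of "ss @ [s]"] show ?case by simp
qed simp

lemma lo_iter_App_left: "lo_iter k a = Some a' \<Longrightarrow> lo_iter k (App a b) = Some (App a' b)"
proof (induction k arbitrary: a)
  case (Suc k)
  then show ?case by (auto simp: first2_def split: option.splits)
qed simp

lemma lo_iter_App_right:
  "lo_step a = None \<Longrightarrow> lo_iter k b = Some b' \<Longrightarrow> lo_iter k (App a b) = Some (App a b')"
proof (induction k arbitrary: b)
  case (Suc k)
  then show ?case by (auto simp: first2_def split: option.splits)
qed simp

lemma normalises_in_closures_App_self:
  assumes "normalises_in (closures c ss) k"
  shows "normalises_in (closures (App c c) ss) (length ss + k + k)"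
proof -
  obtain u where u: "lo_iter k (closures c ss) = Some u" "lo_step u = None"
    using assms normalises_in_def by blast
  have "lo_iter (length ss) (closures (App c c) ss) = Some (App (closures c ss) (closures c ss))"
    using lo_iter_closures_App[of ss' c "[]" c for ss'] by simp
  moreover have "lo_iter k (App (closures c ss) (closures c ss)) = Some (App u (closures c ss))"
    using u(1) by (rule lo_iter_App_left)
  moreover have "lo_iter k (App u (closures c ss)) = Some (App u u)"
    using u(2,1) by (rule lo_iter_App_right)
  moreover have "lo_step (App u u) = None"
    using u(2) by (simp add: first2_def)
  ultimately show ?thesis
    by (simp add: normalises_in_def lo_iter_add)
qed

lemma Lambda_prods_lang_witnesses:
  assumes "Lambda_prods \<subseteq> P"
  shows "Zero \<in> lang P (Var NT)" and "App Zero Zero \<in> lang P (Var NT)"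
    and "Clo Zero Shift \<in> lang P (Var NT)" and "Shift \<in> lang P (Var NS)"
proof -
  have prod: "t \<in> lang P (Var X)" if "(X, \<beta>) \<in> Lambda_prods" "t \<in> lang P \<beta>" for X \<beta> t
    using that assms lang_rhs_subset_lang_Var by blast
  have N: "Zero \<in> lang P (Var NN)"
    by (rule prod[of NN Zero]) (simp_all add: Lambda_prods_def lang_Zero)
  show S: "Shift \<in> lang P (Var NS)"
    by (rule prod[of NS Shift]) (simp_all add: Lambda_prods_def lang_Shift)
  show T: "Zero \<in> lang P (Var NT)"
    by (rule prod[of NT "Var NN"]) (simp_all add: Lambda_prods_def N)
  show "App Zero Zero \<in> lang P (Var NT)"
    by (rule prod[of NT "App (Var NT) (Var NT)"]) (simp_all add: Lambda_prods_def lang_App T)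
  show "Clo Zero Shift \<in> lang P (Var NT)"
    by (rule prod[of NT "Clo (Var NT) (Var NS)"]) (simp_all add: Lambda_prods_def lang_Clo T S)
qed

lemma closures_of_T_not_normalising_uniformly:
  assumes "Lambda_prods \<subseteq> P"
  shows "\<not> (\<forall>t \<in> lang P (Var NT). normalises_in (closures t ss) n)"
proof
  assume "\<forall>t \<in> lang P (Var NT). normalises_in (closures t ss) n"
  then have "normalises_in (closures Zero ss) n" "normalises_in (closures (App Zero Zero) ss) n"
    and Clo: "normalises_in (closures (Clo Zero Shift) ss) n"
    using Lambda_prods_lang_witnesses[OF assms] by blast+
  then have "length ss + n + n = n"
    using normalises_in_closures_App_self normalises_in_unique by blast
  then have "ss = []" "n = 0" by auto
  with Clo show False by (simp add: normalises_in_0)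
qed

abbreviation db_index :: "nat \<Rightarrow> 'v tm" where
  "db_index m \<equiv> (Succ ^^ m) Zero"

lemma inj_db_index: "inj db_index"
proof (rule injI)
  show "db_index m = db_index m' \<Longrightarrow> m = m'" for m m'
    by (induction m arbitrary: m') (case_tac m'; simp)+
qed

lemma is_idx_Succ_funpow [simp]: "is_idx ((Succ ^^ j) c) = is_idx c"
  by (induction j) auto

lemma db_index_normal_term: "is_term (db_index m) \<and> normalises_in (db_index m) 0"
proof -
  have "lo_step (db_index m) = None" by (induction m) simp_all
  then show ?thesis by (cases m) (simp_all add: normalises_in_0)
qed

lemma not_is_term_Succ_funpow_Shift: "\<not> is_term ((Succ ^^ j) Shift)"
  by (cases j) simp_all

lemma Succ_funpow_Clo_not_normal:
  "is_term ((Succ ^^ j) (Clo a s)) \<Longrightarrow> \<not> normalises_in ((Succ ^^ j) (Clo a s)) 0"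
  using lo_step_Clo_term_subst[of a s] by (cases j) (simp_all add: normalises_in_0)

lemma lang_Succ_funpow: "lang P ((Succ ^^ j) a) = (Succ ^^ j) ` lang P a"
  by (induction j) (simp_all add: lang_Succ image_image)

lemma lang_idx_shape:
  assumes "t \<in> lang P \<beta>" and "is_idx t"
  shows "(\<exists>X. \<beta> = Var X) \<or> (\<exists>b. \<beta> = Succ b) \<or> \<beta> = Zero"
proof -
  from assms(1) obtain ds where "rderiv P \<beta> ds t" by (auto simp: lang_def)
  then show ?thesis using assms(2) by (cases rule: rderiv.cases) auto
qed

lemma db_index_in_lang_shape:
  "db_index m \<in> lang P \<beta> \<Longrightarrow> \<beta> = db_index m \<or> (\<exists>j X. \<beta> = (Succ ^^ j) (Var X))"
proof (induction \<beta> arbitrary: m)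
  case (Var X)
  then show ?case by (metis funpow_0)
next
  case (Succ \<beta>)
  then obtain m' where m: "m = Suc m'" and "db_index m' \<in> lang P \<beta>"
    by (cases m) (auto simp: lang_Succ)
  with Succ.IH consider "\<beta> = db_index m'" | j X where "\<beta> = (Succ ^^ j) (Var X)"
    by blast
  then show ?case
  proof cases
    case (2 j X)
    then have "Succ \<beta> = (Succ ^^ Suc j) (Var X)" by simp
    then show ?thesis by blast
  qed (simp add: m)
next
  case Zero
  then show ?case by (cases m) (simp_all add: lang_Zero)
qed (fastforce dest: lang_idx_shape)+

lemma reduction_grammarD:
  assumes "reduction_grammar P n"
  shows "finite P" and "Lambda_prods \<subseteq> P"
    and "k \<le> n \<Longrightarrow> lang P (Var (NG k)) = {t. is_term t \<and> normalises_in t k}"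
  using assms unfolding reduction_grammar_def by auto

lemma simple_grammar_G0_Succ_funpow_Var:
  assumes "simple_grammar P" and "(NG 0, (Succ ^^ j) (Var X)) \<in> P"
  shows "X \<in> {NT, NS, NN}"
proof -
  have "set_tm ((Succ ^^ j) (Var X)) = {X}" by (induction j) auto
  with assms show ?thesis
    unfolding simple_grammar_def Lambda_prods_def by (cases j) fastforce+
qed

(* Not automatic: the grammar may contain N-productions besides those of \<Lambda>. *)
lemma lang_N_no_Clo:
  assumes "reduction_grammar P n" and "simple_grammar P"
  shows "Clo a s \<notin> lang P (Var NN)"
proof
  assume Clo: "Clo a s \<in> lang P (Var NN)"
  have L: "Lambda_prods \<subseteq> P"
    and G0: "lang P (Var (NG 0)) = {t. is_term t \<and> normalises_in t 0}"
    using reduction_grammarD[OF assms(1)] by auto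
  have "inj (\<lambda>m. (NG 0, db_index m :: nt tm))"
    using inj_db_index by (auto simp: inj_def)
  then have "\<not> range (\<lambda>m. (NG 0, db_index m)) \<subseteq> P"
    using reduction_grammarD(1)[OF assms(1)] finite_subset finite_imageD by (metis infinite_UNIV_nat)
  then obtain m where m: "(NG 0, db_index m) \<notin> P" by blast
  have "db_index m \<in> lang P (Var (NG 0))"
    using G0 db_index_normal_term by blast
  then obtain \<beta> where \<beta>: "(NG 0, \<beta>) \<in> P" "db_index m \<in> lang P \<beta>"
    by (auto simp: mem_lang_Var)
  with m obtain j X where \<beta>_eq: "\<beta> = (Succ ^^ j) (Var X)"
    using db_index_in_lang_shape by metis
  have normal: "is_term ((Succ ^^ j) c) \<and> normalises_in ((Succ ^^ j) c) 0"
    if "c \<in> lang P (Var X)" for c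
    using that lang_rhs_subset_lang_Var[OF \<beta>(1)] G0 by (auto simp: \<beta>_eq lang_Succ_funpow)
  have "X \<in> {NT, NS, NN}"
    using assms(2) \<beta>(1) \<beta>_eq simple_grammar_G0_Succ_funpow_Var by blast
  then show False
    using normal Lambda_prods_lang_witnesses[OF L] Clo
      Succ_funpow_Clo_not_normal not_is_term_Succ_funpow_Shift by blast
qed

lemma is_term_closures: "is_term (closures t ss) \<Longrightarrow> is_term t"
  by (induction ss rule: rev_induct) auto

lemma lang_head_closure_free:
  assumes rg: "reduction_grammar P n" and sg: "simple_grammar P"
    and head: "clo_args \<chi> = []" and not_G: "\<forall>k. \<chi> \<noteq> Var (NG k)"
    and normal: "\<forall>t' \<in> lang P \<chi>. is_term (closures t' ss) \<and> normalises_in (closures t' ss) n"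
    and t: "t \<in> lang P \<chi>"
  shows "clo_args t = []"
proof (cases "\<exists>X. \<chi> = Var X")
  case False
  then show ?thesis using lang_preserves_closure_free_head t head by blast
next
  case True
  then obtain X where \<chi>: "\<chi> = Var X" by blast
  have L: "Lambda_prods \<subseteq> P" using reduction_grammarD(2)[OF rg] .
  show ?thesis
  proof (cases X)
    case NT
    then show ?thesis using \<chi> normal closures_of_T_not_normalising_uniformly[OF L] by blast
  next
    case NS
    then show ?thesis
      using \<chi> normal Lambda_prods_lang_witnesses(4)[OF L] is_term_closures by fastforce
  next
    case NN
    then show ?thesis using \<chi> t lang_N_no_Clo[OF rg sg] by (cases t) auto
  next
    case NG
    then show ?thesis using \<chi> not_G by blast
  qed
qed

theorem mainTheorem6:
  fixes P :: "prod set" and n :: nat and \<alpha> :: "nt tm"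
  assumes "reduction_grammar P n"
    and "simple_grammar P"
    and "verbose P"
    and "(NG n, \<alpha>) \<in> P"
  shows "\<forall>\<delta> \<in> lang P \<alpha>. closure_width \<delta> = closure_width \<alpha>"
proof
  fix \<delta> assume \<delta>: "\<delta> \<in> lang P \<alpha>"
  define \<chi> \<sigma>s where "\<chi> = clo_head \<alpha>" and "\<sigma>s = clo_args \<alpha>"
  have \<alpha>: "\<alpha> = closures \<chi> \<sigma>s" and \<chi>: "clo_args \<chi> = []"
    by (simp_all add: \<chi>_def \<sigma>s_def closures_clo_head_clo_args)
  obtain t ss where t: "t \<in> lang P \<chi>" "\<delta> = closures t ss" "length ss = length \<sigma>s"
    and replace: "\<forall>t' \<in> lang P \<chi>. closures t' ss \<in> lang P \<alpha>"
    using mem_lang_closures \<delta> \<alpha> by metis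
  have "\<forall>t' \<in> lang P \<chi>. is_term (closures t' ss) \<and> normalises_in (closures t' ss) n"
    using replace lang_rhs_subset_lang_Var[OF assms(4)] reduction_grammarD(3)[OF assms(1) order_refl]
    by blast
  moreover have "\<forall>k. \<chi> \<noteq> Var (NG k)"
    using assms(3,4) \<alpha> unfolding verbose_def by blast
  ultimately have "clo_args t = []"
    using lang_head_closure_free[OF assms(1,2) \<chi>] t(1) by blast
  then show "closure_width \<delta> = closure_width \<alpha>"
    using t(2,3) \<alpha> \<chi> by (simp add: closure_width_closures closure_width_eq_length_clo_args)
qed

end
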